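(* For the $2$-state GM+I model on binary 4-taxon trees (the three trees $T_{ab|cd}$, $T_{ac|bd}$, $T_{ad|bc}$ on taxa $a,b,c,d$), the tree parameter is generically identifiable.
   Context: For a binary $n$-taxon tree $T$ (leaves labeled by the taxa, internal vertices of valence 3) with edge set $E$, the $\kappa$-state GM+I model has parameters $\mathbf s=(\delta,\pi_I,\pi_{GM},(M_e)_{e\in E})$: $\delta\in[0,1]$, probability vectors $\pi_I,\pi_{GM}\in[0,1]^\kappa$ ($\pi_{GM}$ the distribution at a chosen root $r$), and $\kappa\times\kappa$ Markov matrices $M_e$ for edges $e$ directed away from $r$. These form a stochastic parameter space $S_T\subseteq\mathbb R^N$, $N=2\kappa-1+|E|\kappa(\kappa-1)$. The joint leaf distribution $P=\phi_T(\mathbf s)$ has entries $p_{i_1\dots i_n}=\delta\,\epsilon(i_1,\dots,i_n)\pi_I(i_1)+(1-\delta)\sum_{(j_v)}\pi_{GM}(j_r)\prod_{e=(u\to w)}M_e(j_u,j_w)$, with $\epsilon=1$ if all indices equal and $0$ otherwise, the sum over all state assignments to vertices extending the leaf states. The tree parameter is generically identifiable for a collection of trees if for each tree $T$ there is a proper algebraic variety $X_T\subsetneq\mathbb C^N$ such that whenever $P\in\bigcup_T\phi_T(S_T\setminus X_T)$, there is a unique tree $T$ with $P\in\phi_T(S_T\setminus X_T)$. *)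

theory Defs
  imports Complex_Main
begin

text \<open>Taxa a,b,c,d are numbered 0,1,2,3; states are 0,1 (kappa = 2).
  Each quartet tree has two internal vertices u, v; the root r is u.
  For the split xy|zw the (directed) edges are
  e0 = u->x, e1 = u->y, e2 = u->v, e3 = v->z, e4 = v->w.\<close>

datatype quartet = AB_CD | AC_BD | AD_BC

text \<open>Leaf ordering (x,y,z,w) of the split xy|zw.\<close>
fun qleaves :: "quartet \<Rightarrow> nat list" where
  "qleaves AB_CD = [0,1,2,3]"
| "qleaves AC_BD = [0,2,1,3]"
| "qleaves AD_BC = [0,3,1,2]"

text \<open>Parameter space dimension N = 2 kappa - 1 + |E| kappa (kappa - 1) = 3 + 5*2 = 13.
  Coordinates of a parameter vector s (entries s i for i < 13; s i = 0 for i >= 13):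
  s 0 = delta, s 1 = pi_I(0), s 2 = pi_GM(0),
  s (3 + 2e) = M_e(0,1), s (4 + 2e) = M_e(1,0) for edges e = 0..4.
  The remaining entries are determined by the stochastic constraints.\<close>

definition gmiN :: nat where "gmiN = 13"

definition pvec :: "real \<Rightarrow> nat \<Rightarrow> real" where
  "pvec p k = (if k = 0 then p else 1 - p)"

definition emat :: "(nat \<Rightarrow> real) \<Rightarrow> nat \<Rightarrow> nat \<Rightarrow> nat \<Rightarrow> real" where
  "emat s e i j = (if i = j then 1 - s (3 + 2 * e + i) else s (3 + 2 * e + i))"

definition gmi_params :: "(nat \<Rightarrow> real) set" where
  "gmi_params = {s. (\<forall>i<gmiN. 0 \<le> s i \<and> s i \<le> 1) \<and> (\<forall>i\<ge>gmiN. s i = 0)}"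

text \<open>The parametrization phi_T: joint distribution of leaf states (i_a,i_b,i_c,i_d),
  set to 0 outside {0,1}^4.\<close>
definition gmi_phi :: "quartet \<Rightarrow> (nat \<Rightarrow> real) \<Rightarrow> (nat \<Rightarrow> nat \<Rightarrow> nat \<Rightarrow> nat \<Rightarrow> real)" where
  "gmi_phi T s i1 i2 i3 i4 =
     (if i1 < 2 \<and> i2 < 2 \<and> i3 < 2 \<and> i4 < 2 then
        (let st = (\<lambda>k. [i1, i2, i3, i4] ! k); L = qleaves T;
             ix = st (L ! 0); iy = st (L ! 1); iz = st (L ! 2); iw = st (L ! 3) in
         s 0 * (if i1 = i2 \<and> i2 = i3 \<and> i3 = i4 then 1 else 0) * pvec (s 1) i1
         + (1 - s 0) * (\<Sum>ju<2. \<Sum>jv<2.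
              pvec (s 2) ju * emat s 0 ju ix * emat s 1 ju iy * emat s 2 ju jv
                * emat s 3 jv iz * emat s 4 jv iw))
      else 0)"

inductive_set polyfun :: "nat \<Rightarrow> ((nat \<Rightarrow> complex) \<Rightarrow> complex) set" for N :: nat where
  pconst: "(\<lambda>x. c) \<in> polyfun N"
| pvar: "i < N \<Longrightarrow> (\<lambda>x. x i) \<in> polyfun N"
| padd: "f \<in> polyfun N \<Longrightarrow> g \<in> polyfun N \<Longrightarrow> (\<lambda>x. f x + g x) \<in> polyfun N"
| pmult: "f \<in> polyfun N \<Longrightarrow> g \<in> polyfun N \<Longrightarrow> (\<lambda>x. f x * g x) \<in> polyfun N"

definition algebraic_variety :: "nat \<Rightarrow> (nat \<Rightarrow> complex) set \<Rightarrow> bool" where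
  "algebraic_variety N X \<longleftrightarrow> (\<exists>F \<subseteq> polyfun N. X = {x. \<forall>f\<in>F. f x = 0})"

text \<open>A proper variety: not all of C^N (vectors are nat-indexed, only coordinates < N matter).\<close>
definition proper_variety :: "nat \<Rightarrow> (nat \<Rightarrow> complex) set \<Rightarrow> bool" where
  "proper_variety N X \<longleftrightarrow> algebraic_variety N X \<and> (\<exists>x. (\<forall>i\<ge>N. x i = 0) \<and> x \<notin> X)"

definition avoid :: "(nat \<Rightarrow> real) set \<Rightarrow> (nat \<Rightarrow> complex) set \<Rightarrow> (nat \<Rightarrow> real) set" where
  "avoid S X = {s \<in> S. (\<lambda>i. complex_of_real (s i)) \<notin> X}"

definition gmi_quartet_tree_generically_identifiable :: bool where
  "gmi_quartet_tree_generically_identifiable \<longleftrightarrow>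
     (\<exists>X :: quartet \<Rightarrow> (nat \<Rightarrow> complex) set.
        (\<forall>T. proper_variety gmiN (X T)) \<and>
        (\<forall>P. P \<in> (\<Union>T. gmi_phi T ` avoid gmi_params (X T)) \<longrightarrow>
             (\<exists>!T. P \<in> gmi_phi T ` avoid gmi_params (X T))))"

end

theory Submission
  imports Defs
begin

text \<open>Flatten the joint distribution along the split of a quartet tree T into a 4 x 4 matrix
  (rows: states at one cherry, columns: states at the other). The invariable-site component only
  touches the entries of the constant patterns 0000 and 1111, so the 3 x 3 minor deleting row 11
  and column 00 sees only the general Markov component, which has rank at most 2 because the
  internal edge carries two states: this minor vanishes on the image of T. Pulled back along the
  parametrization of T, the minors of the two other trees are polynomials in the parameters; the
  zero set of their product is the exceptional variety of T, which is proper as soon as one point,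
  stochastic or not, makes both nonzero.\<close>

lemma polyfun_diff:
  "f \<in> polyfun N \<Longrightarrow> g \<in> polyfun N \<Longrightarrow> (\<lambda>x. f x - g x) \<in> polyfun N"
proof -
  assume "f \<in> polyfun N" "g \<in> polyfun N"
  then have "(\<lambda>x. f x + (\<lambda>x. -1) x * g x) \<in> polyfun N"
    by (intro polyfun.padd polyfun.pmult polyfun.pconst)
  then show ?thesis by simp
qed

lemma polyfun_sum:
  "finite A \<Longrightarrow> (\<And>k. k \<in> A \<Longrightarrow> f k \<in> polyfun N) \<Longrightarrow> (\<lambda>x. \<Sum>k\<in>A. f k x) \<in> polyfun N"
proof (induction A rule: finite_induct)
  case empty
  then show ?case using polyfun.pconst[of 0 N] by simp
next
  case (insert a A)
  then have "(\<lambda>x. f a x + (\<Sum>k\<in>A. f k x)) \<in> polyfun N"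
    by (intro polyfun.padd) auto
  with insert show ?case by simp
qed

lemma polyfun_prod:
  "finite A \<Longrightarrow> (\<And>k. k \<in> A \<Longrightarrow> f k \<in> polyfun N) \<Longrightarrow> (\<lambda>x. \<Prod>k\<in>A. f k x) \<in> polyfun N"
proof (induction A rule: finite_induct)
  case empty
  then show ?case using polyfun.pconst[of 1 N] by simp
next
  case (insert a A)
  then have "(\<lambda>x. f a x * (\<Prod>k\<in>A. f k x)) \<in> polyfun N"
    by (intro polyfun.pmult) auto
  with insert show ?case by simp
qed

lemma proper_variety_zero_set:
  assumes "f \<in> polyfun N" and "\<forall>i\<ge>N. x i = 0" and "f x \<noteq> 0"
  shows "proper_variety N {x. f x = 0}"
proof -
  have "{x. f x = 0} = {x. \<forall>g\<in>{f}. g x = 0}" by simp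
  with assms show ?thesis
    unfolding proper_variety_def algebraic_variety_def by blast
qed

lemma quartet_UNIV: "UNIV = {AB_CD, AC_BD, AD_BC}"
  using quartet.exhaust by auto

instance quartet :: finite
  by standard (simp add: quartet_UNIV)

text \<open>The parametrization over an arbitrary commutative ring, so that it can also be evaluated
  at complex points.\<close>

definition pvec_ring :: "'a::comm_ring_1 \<Rightarrow> nat \<Rightarrow> 'a" where
  "pvec_ring p k = (if k = 0 then p else 1 - p)"

definition emat_ring :: "(nat \<Rightarrow> 'a::comm_ring_1) \<Rightarrow> nat \<Rightarrow> nat \<Rightarrow> nat \<Rightarrow> 'a" where
  "emat_ring s e i j = (if i = j then 1 - s (3 + 2 * e + i) else s (3 + 2 * e + i))"

definition gmi_phi_ring ::
    "quartet \<Rightarrow> (nat \<Rightarrow> 'a::comm_ring_1) \<Rightarrow> nat \<Rightarrow> nat \<Rightarrow> nat \<Rightarrow> nat \<Rightarrow> 'a" where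
  "gmi_phi_ring T s i1 i2 i3 i4 =
     (if i1 < 2 \<and> i2 < 2 \<and> i3 < 2 \<and> i4 < 2 then
        (let st = (\<lambda>k. [i1, i2, i3, i4] ! k); L = qleaves T;
             ix = st (L ! 0); iy = st (L ! 1); iz = st (L ! 2); iw = st (L ! 3) in
         s 0 * (if i1 = i2 \<and> i2 = i3 \<and> i3 = i4 then 1 else 0) * pvec_ring (s 1) i1
         + (1 - s 0) * (\<Sum>ju<2. \<Sum>jv<2.
              pvec_ring (s 2) ju * emat_ring s 0 ju ix * emat_ring s 1 ju iy
                * emat_ring s 2 ju jv * emat_ring s 3 jv iz * emat_ring s 4 jv iw))
      else 0)"

lemma gmi_phi_eq_ring: "gmi_phi T = gmi_phi_ring T"
  unfolding gmi_phi_def gmi_phi_ring_def pvec_def pvec_ring_def emat_def emat_ring_def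
  by (intro ext) simp

lemma gmi_phi_ring_of_real:
  "gmi_phi_ring T (\<lambda>i. of_real (s i) :: complex) a b c d = of_real (gmi_phi_ring T s a b c d)"
proof -
  have "pvec_ring (of_real p :: complex) k = of_real (pvec_ring p k)" for p k
    unfolding pvec_ring_def by simp
  moreover have "emat_ring (\<lambda>i. of_real (s i) :: complex) e i j = of_real (emat_ring s e i j)"
    for e i j
    unfolding emat_ring_def by simp
  ultimately show ?thesis
    unfolding gmi_phi_ring_def Let_def by (simp add: of_real_sum)
qed

lemma gmi_phi_ring_polyfun: "(\<lambda>x. gmi_phi_ring T x a b c d) \<in> polyfun gmiN"
proof (cases "a < 2 \<and> b < 2 \<and> c < 2 \<and> d < 2")
  case True
  have leaf_state: "[a, b, c, d] ! (qleaves T ! k) < 2" if "k < 4" for k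
    using True that by (cases T; cases k) (auto simp: numeral_eq_Suc less_Suc_eq)
  have pvec: "(\<lambda>x. pvec_ring (x i) k) \<in> polyfun gmiN" if "i < gmiN" for i k
    using that unfolding pvec_ring_def
    by (cases "k = 0") (auto intro: polyfun.intros polyfun_diff)
  have emat: "(\<lambda>x. emat_ring x e i j) \<in> polyfun gmiN" if "3 + 2 * e + i < gmiN" for e i j
    using that unfolding emat_ring_def
    by (cases "i = j") (auto intro: polyfun.intros polyfun_diff)
  show ?thesis
    unfolding gmi_phi_ring_def Let_def if_P[OF True]
    by (intro polyfun.padd polyfun.pmult polyfun_diff polyfun_sum polyfun.pconst polyfun.pvar
          pvec emat finite_lessThan; use leaf_state in \<open>simp add: gmiN_def\<close>)
next
  case False
  show ?thesis
    unfolding gmi_phi_ring_def if_not_P[OF False] by (rule polyfun.pconst)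
qed

text \<open>Row (a, b) and column (c, d) are the states of the leaves in the order of qleaves T.\<close>

definition flattening ::
    "quartet \<Rightarrow> (nat \<Rightarrow> nat \<Rightarrow> nat \<Rightarrow> nat \<Rightarrow> 'a) \<Rightarrow> nat \<Rightarrow> nat \<Rightarrow> nat \<Rightarrow> nat \<Rightarrow> 'a" where
  "flattening T P a b c d =
     (case T of AB_CD \<Rightarrow> P a b c d | AC_BD \<Rightarrow> P a c b d | AD_BC \<Rightarrow> P a c d b)"

definition det3 :: "'a::comm_ring_1 \<Rightarrow> 'a \<Rightarrow> 'a \<Rightarrow> 'a \<Rightarrow> 'a \<Rightarrow> 'a \<Rightarrow> 'a \<Rightarrow> 'a \<Rightarrow> 'a \<Rightarrow> 'a" where
  "det3 a b c d e f g h i = a * (e * i - f * h) - b * (d * i - f * g) + c * (d * h - e * g)"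

definition flattening_minor ::
    "quartet \<Rightarrow> (nat \<Rightarrow> nat \<Rightarrow> nat \<Rightarrow> nat \<Rightarrow> 'a::comm_ring_1) \<Rightarrow> 'a" where
  "flattening_minor T P = det3
     (flattening T P 0 0 0 1) (flattening T P 0 0 1 0) (flattening T P 0 0 1 1)
     (flattening T P 0 1 0 1) (flattening T P 0 1 1 0) (flattening T P 0 1 1 1)
     (flattening T P 1 0 0 1) (flattening T P 1 0 1 0) (flattening T P 1 0 1 1)"

lemma det3_rank2_eq_0:
  fixes k :: "'a::comm_ring_1"
  shows "det3 (k*(a1*b1+a1'*b1')) (k*(a1*b2+a1'*b2')) (k*(a1*b3+a1'*b3'))
              (k*(a2*b1+a2'*b1')) (k*(a2*b2+a2'*b2')) (k*(a2*b3+a2'*b3'))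
              (k*(a3*b1+a3'*b1')) (k*(a3*b2+a3'*b2')) (k*(a3*b3+a3'*b3')) = 0"
  unfolding det3_def by (simp add: algebra_simps)

definition root_cherry_weight :: "(nat \<Rightarrow> 'a::comm_ring_1) \<Rightarrow> nat \<Rightarrow> nat \<Rightarrow> nat \<Rightarrow> 'a" where
  "root_cherry_weight s u a b = pvec_ring (s 2) u * emat_ring s 0 u a * emat_ring s 1 u b"

definition far_cherry_weight :: "(nat \<Rightarrow> 'a::comm_ring_1) \<Rightarrow> nat \<Rightarrow> nat \<Rightarrow> nat \<Rightarrow> 'a" where
  "far_cherry_weight s u c d = (\<Sum>v<2. emat_ring s 2 u v * emat_ring s 3 v c * emat_ring s 4 v d)"

lemma flattening_gmi_phi_ring_nonconstant:
  assumes "a < 2" "b < 2" "c < 2" "d < 2" "\<not> (a = b \<and> b = c \<and> c = d)"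
  shows "flattening T (gmi_phi_ring T s) a b c d =
    (1 - s 0) * (root_cherry_weight s 0 a b * far_cherry_weight s 0 c d
                 + root_cherry_weight s 1 a b * far_cherry_weight s 1 c d)"
proof -
  have "(\<Sum>u<2. \<Sum>v<2. pvec_ring (s 2) u * emat_ring s 0 u a * emat_ring s 1 u b
            * emat_ring s 2 u v * emat_ring s 3 v c * emat_ring s 4 v d)
        = root_cherry_weight s 0 a b * far_cherry_weight s 0 c d
          + root_cherry_weight s 1 a b * far_cherry_weight s 1 c d"
    unfolding root_cherry_weight_def far_cherry_weight_def
    by (simp add: numeral_2_eq_2 algebra_simps)
  with assms show ?thesis
    by (cases T) (auto simp: flattening_def gmi_phi_ring_def Let_def)
qed

lemma flattening_minor_gmi_phi_ring: "flattening_minor T (gmi_phi_ring T s) = 0"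
  unfolding flattening_minor_def by (simp add: flattening_gmi_phi_ring_nonconstant det3_rank2_eq_0)

lemma flattening_minor_polyfun: "(\<lambda>x. flattening_minor T' (gmi_phi_ring T x)) \<in> polyfun gmiN"
  unfolding flattening_minor_def det3_def flattening_def
  by (cases T') (simp_all; intro gmi_phi_ring_polyfun polyfun.padd polyfun.pmult polyfun_diff)+

lemma flattening_minor_of_real:
  "flattening_minor T' (gmi_phi_ring T (\<lambda>i. of_real (s i) :: complex))
     = of_real (flattening_minor T' (gmi_phi_ring T s))"
  unfolding flattening_minor_def det3_def flattening_def
  by (cases T') (simp_all add: gmi_phi_ring_of_real)

definition exceptional_variety :: "quartet \<Rightarrow> (nat \<Rightarrow> complex) set" where
  "exceptional_variety T =
     {x. (\<Prod>T'\<in>-{T}. flattening_minor T' (gmi_phi_ring T x)) = 0}"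

definition generic_point :: "nat \<Rightarrow> real" where
  "generic_point i = (if i < 13 then [0, -2, 2, 1, -1, 2, 0, 0, 3, -1, 0, 2, -2] ! i else 0)"

lemma flattening_minor_generic_point:
  "T' \<noteq> T \<Longrightarrow> flattening_minor T' (gmi_phi_ring T generic_point) \<noteq> 0"
  by (cases T; cases T')
     (simp_all add: flattening_minor_def det3_def flattening_def gmi_phi_ring_def
        pvec_ring_def emat_ring_def generic_point_def numeral_2_eq_2)

lemma exceptional_variety_proper: "proper_variety gmiN (exceptional_variety T)"
  unfolding exceptional_variety_def
proof (rule proper_variety_zero_set)
  show "(\<lambda>x. \<Prod>T'\<in>-{T}. flattening_minor T' (gmi_phi_ring T x)) \<in> polyfun gmiN"
    by (intro polyfun_prod flattening_minor_polyfun) simp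
  show "\<forall>i\<ge>gmiN. complex_of_real (generic_point i) = 0"
    by (simp add: gmiN_def generic_point_def)
  show "(\<Prod>T'\<in>-{T}. flattening_minor T' (gmi_phi_ring T (\<lambda>i. of_real (generic_point i))))
          \<noteq> (0 :: complex)"
    by (simp add: flattening_minor_of_real flattening_minor_generic_point)
qed

lemma flattening_minor_avoid:
  assumes "s \<in> avoid gmi_params (exceptional_variety T)" and "T' \<noteq> T"
  shows "flattening_minor T' (gmi_phi T s) \<noteq> 0"
proof -
  have "(\<Prod>T'\<in>-{T}. flattening_minor T' (gmi_phi_ring T (\<lambda>i. of_real (s i)))) \<noteq> (0 :: complex)"
    using assms(1) by (simp add: avoid_def exceptional_variety_def)
  with assms(2) show ?thesis
    by (simp add: flattening_minor_of_real gmi_phi_eq_ring)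
qed

theorem corollary7:
  shows "gmi_quartet_tree_generically_identifiable"
  unfolding gmi_quartet_tree_generically_identifiable_def
proof (intro exI conjI allI impI)
  show "proper_variety gmiN (exceptional_variety T)" for T
    by (rule exceptional_variety_proper)
  fix P assume "P \<in> (\<Union>T. gmi_phi T ` avoid gmi_params (exceptional_variety T))"
  then obtain T s where s: "s \<in> avoid gmi_params (exceptional_variety T)" and P: "P = gmi_phi T s"
    by blast
  show "\<exists>!T. P \<in> gmi_phi T ` avoid gmi_params (exceptional_variety T)"
  proof (rule ex1I)
    show "P \<in> gmi_phi T ` avoid gmi_params (exceptional_variety T)"
      using s P by blast
    fix T' assume "P \<in> gmi_phi T' ` avoid gmi_params (exceptional_variety T')"
    then obtain s' where "P = gmi_phi T' s'" by blast
    then have "flattening_minor T' P = 0"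
      by (simp add: gmi_phi_eq_ring flattening_minor_gmi_phi_ring)
    with s P show "T' = T"
      using flattening_minor_avoid by blast
  qed
qed

end
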